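(* Let $\Omega\subset\mathbb{R}^2$ be a bounded, simply connected domain with $C^{2+\epsilon}$ boundary, let $\lambda_j$ be any eigenvalue of $-\Delta$ on $\Omega$ with homogeneous Dirichlet boundary condition, with eigenfunction $\phi_j$, and set $P_+=\int_{\Omega_+}\phi_j\,dx$ and $P_-=-\int_{\Omega_-}\phi_j\,dx$, where $\Omega_\pm=\{x\in\Omega:\pm\phi_j(x)>0\}$. Consider $f(\varphi)=\lambda_j\varphi+\vartheta(\varphi)$ with $\vartheta\colon\mathbb{R}\to\mathbb{R}$ satisfying $0<A<\vartheta(\eta)<B$ for all $\eta$, for some constants $A,B$. If $P_+\neq P_-$, then for some ranges of $A$ and $B$ (i.e. there exist constants $0<A<B$ such that for every such $\vartheta$) the problem $-\Delta\varphi=f(\varphi)$ in $\Omega$, $\varphi=0$ on $\partial\Omega$, has no solution $\varphi\in H^1_0(\Omega)$ (with $f(\varphi)\in L^2(\Omega)$, the equation holding weakly). *)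

theory Defs
  imports "HOL-Analysis.Analysis"
begin

definition holder_on :: "real \<Rightarrow> real set \<Rightarrow> (real \<Rightarrow> real) \<Rightarrow> bool" where
  "holder_on \<alpha> S h \<longleftrightarrow> (\<exists>C. \<forall>x\<in>S. \<forall>y\<in>S. \<bar>h x - h y\<bar> \<le> C * \<bar>x - y\<bar> powr \<alpha>)"

text \<open>C^{2+eps} boundary: near every boundary point, after a rigid motion, the domain
  is the region above the graph of a C^2 function whose second derivative is
  eps-Hoelder continuous.\<close>
definition C2eps_boundary :: "real \<Rightarrow> (real^2) set \<Rightarrow> bool" where
  "C2eps_boundary \<epsilon> \<Omega> \<longleftrightarrow> 0 < \<epsilon> \<and> \<epsilon> < 1 \<and>
     (\<forall>p\<in>frontier \<Omega>. \<exists>r>0. \<exists>T g g' g''.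
        orthogonal_transformation (T :: real^2 \<Rightarrow> real^2) \<and>
        (\<forall>t. (g has_real_derivative g' t) (at t) \<and> (g' has_real_derivative g'' t) (at t)) \<and>
        continuous_on UNIV g'' \<and> holder_on \<epsilon> {-r..r} g'' \<and>
        (\<forall>x\<in>ball p r. x \<in> \<Omega> \<longleftrightarrow> (T (x - p)) $ 2 > g ((T (x - p)) $ 1)))"

text \<open>C^infinity functions on the plane: differentiable, with all partial
  derivatives (of all orders) again differentiable.\<close>
definition smooth_fun :: "(real^2 \<Rightarrow> real) \<Rightarrow> bool" where
  "smooth_fun f \<longleftrightarrow> (\<exists>F. F f \<and> (\<forall>h. F h \<longrightarrow>
       (\<forall>x. h differentiable (at x)) \<and>
       (\<forall>i. F (\<lambda>x. frechet_derivative h (at x) (axis i 1)))))"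

definition pderiv2 :: "(real^2 \<Rightarrow> real) \<Rightarrow> 2 \<Rightarrow> real^2 \<Rightarrow> real" where
  "pderiv2 f i x = frechet_derivative f (at x) (axis i 1)"

definition grad2 :: "(real^2 \<Rightarrow> real) \<Rightarrow> real^2 \<Rightarrow> real^2" where
  "grad2 f x = (\<chi> i. pderiv2 f i x)"

text \<open>Test functions C_c^infinity(Omega) (extended by zero to the plane).\<close>
definition test_fun :: "(real^2) set \<Rightarrow> (real^2 \<Rightarrow> real) \<Rightarrow> bool" where
  "test_fun \<Omega> \<psi> \<longleftrightarrow> smooth_fun \<psi> \<and> compact (closure {x. \<psi> x \<noteq> 0}) \<and>
     closure {x. \<psi> x \<noteq> 0} \<subseteq> \<Omega>"

definition L2_on :: "(real^2) set \<Rightarrow> (real^2 \<Rightarrow> real) \<Rightarrow> bool" where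
  "L2_on \<Omega> u \<longleftrightarrow> u \<in> borel_measurable (lebesgue_on \<Omega>) \<and>
     integrable (lebesgue_on \<Omega>) (\<lambda>x. (u x)^2)"

definition weak_gradient :: "(real^2) set \<Rightarrow> (real^2 \<Rightarrow> real) \<Rightarrow> (real^2 \<Rightarrow> real^2) \<Rightarrow> bool" where
  "weak_gradient \<Omega> u g \<longleftrightarrow> (\<forall>\<psi>. test_fun \<Omega> \<psi> \<longrightarrow> (\<forall>i.
      integral\<^sup>L (lebesgue_on \<Omega>) (\<lambda>x. u x * pderiv2 \<psi> i x) =
      - integral\<^sup>L (lebesgue_on \<Omega>) (\<lambda>x. g x $ i * \<psi> x)))"

definition H1_grad :: "(real^2) set \<Rightarrow> (real^2 \<Rightarrow> real) \<Rightarrow> (real^2 \<Rightarrow> real^2) \<Rightarrow> bool" where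
  "H1_grad \<Omega> u g \<longleftrightarrow> L2_on \<Omega> u \<and> (\<forall>i. L2_on \<Omega> (\<lambda>x. g x $ i)) \<and> weak_gradient \<Omega> u g"

text \<open>H^1_0(Omega): closure of C_c^infinity(Omega) in the H^1 norm.\<close>
definition H10 :: "(real^2) set \<Rightarrow> (real^2 \<Rightarrow> real) \<Rightarrow> bool" where
  "H10 \<Omega> u \<longleftrightarrow> (\<exists>g. H1_grad \<Omega> u g \<and>
     (\<exists>\<psi>::nat \<Rightarrow> real^2 \<Rightarrow> real. (\<forall>n. test_fun \<Omega> (\<psi> n)) \<and>
        (\<lambda>n. integral\<^sup>L (lebesgue_on \<Omega>) (\<lambda>x. (\<psi> n x - u x)^2)) \<longlonglongrightarrow> 0 \<and>
        (\<lambda>n. integral\<^sup>L (lebesgue_on \<Omega>) (\<lambda>x. (norm (grad2 (\<psi> n) x - g x))^2)) \<longlonglongrightarrow> 0))"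

definition dirichlet_weak_solution ::
  "(real^2) set \<Rightarrow> (real^2 \<Rightarrow> real) \<Rightarrow> (real^2 \<Rightarrow> real) \<Rightarrow> bool" where
  "dirichlet_weak_solution \<Omega> F u \<longleftrightarrow> H10 \<Omega> u \<and> L2_on \<Omega> F \<and>
     (\<exists>g. H1_grad \<Omega> u g \<and> (\<forall>v. test_fun \<Omega> v \<longrightarrow>
        integral\<^sup>L (lebesgue_on \<Omega>) (\<lambda>x. g x \<bullet> grad2 v x) =
        integral\<^sup>L (lebesgue_on \<Omega>) (\<lambda>x. F x * v x)))"

definition dirichlet_eigenpair :: "(real^2) set \<Rightarrow> real \<Rightarrow> (real^2 \<Rightarrow> real) \<Rightarrow> bool" where
  "dirichlet_eigenpair \<Omega> \<mu> \<phi> \<longleftrightarrow> dirichlet_weak_solution \<Omega> (\<lambda>x. \<mu> * \<phi> x) \<phi> \<and>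
     \<not> (AE x in lebesgue_on \<Omega>. \<phi> x = 0)"

end

theory Submission
  imports Defs
begin

text \<open>Testing the equation against the eigenfunction \<open>\<phi>\<^sub>j\<close> and using the symmetry of the
  weak Dirichlet form, \<open>\<integral> \<nabla>\<phi>\<cdot>\<nabla>\<phi>\<^sub>j = \<integral> f(\<phi>) \<phi>\<^sub>j = \<lambda>\<^sub>j \<integral> \<phi> \<phi>\<^sub>j\<close>, shows that every solution satisfies
  \<open>\<integral> \<theta>(\<phi>) \<phi>\<^sub>j = 0\<close> (Fredholm alternative). Splitting \<open>\<phi>\<^sub>j\<close> into its positive and negative
  parts, \<open>A < \<theta> < B\<close> forces \<open>A P\<^sub>+ - B P\<^sub>- \<le> 0 \<le> B P\<^sub>+ - A P\<^sub>-\<close>. If \<open>P\<^sub>+ \<noteq> P\<^sub>-\<close>, taking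
  \<open>A = 1\<close> and \<open>B > 1\<close> close enough to \<open>1\<close> violates one of these inequalities.\<close>

lemma square_integrable_mult:
  fixes f g :: "'a \<Rightarrow> real"
  assumes "f \<in> borel_measurable M" "g \<in> borel_measurable M"
    and "integrable M (\<lambda>x. (f x)\<^sup>2)" "integrable M (\<lambda>x. (g x)\<^sup>2)"
  shows "integrable M (\<lambda>x. f x * g x)"
proof (rule Bochner_Integration.integrable_bound)
  show "integrable M (\<lambda>x. ((f x)\<^sup>2 + (g x)\<^sup>2) / 2)"
    using assms by auto
  show "AE x in M. norm (f x * g x) \<le> norm (((f x)\<^sup>2 + (g x)\<^sup>2) / 2)"
  proof (intro AE_I2)
    fix x
    have "2 * \<bar>f x\<bar> * \<bar>g x\<bar> \<le> (f x)\<^sup>2 + (g x)\<^sup>2"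
      using sum_squares_bound[of "\<bar>f x\<bar>" "\<bar>g x\<bar>"] by simp
    then show "norm (f x * g x) \<le> norm (((f x)\<^sup>2 + (g x)\<^sup>2) / 2)"
      by (simp add: abs_mult)
  qed
qed (use assms in measurable)

lemma square_integrable_diff:
  fixes f g :: "'a \<Rightarrow> real"
  assumes "f \<in> borel_measurable M" "g \<in> borel_measurable M"
    and "integrable M (\<lambda>x. (f x)\<^sup>2)" "integrable M (\<lambda>x. (g x)\<^sup>2)"
  shows "integrable M (\<lambda>x. (f x - g x)\<^sup>2)"
proof -
  have "integrable M (\<lambda>x. (f x)\<^sup>2 + (g x)\<^sup>2 - 2 * (f x * g x))"
    using square_integrable_mult[OF assms] assms by auto
  then show ?thesis
    by (simp add: power2_diff mult.assoc)
qed

lemma (in finite_measure) bounded_imp_square_integrable: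
  fixes f :: "'a \<Rightarrow> real"
  assumes "f \<in> borel_measurable M" and "\<And>x. \<bar>f x\<bar> \<le> C"
  shows "integrable M (\<lambda>x. (f x)\<^sup>2)"
proof (rule integrable_const_bound)
  show "AE x in M. norm ((f x)\<^sup>2) \<le> C\<^sup>2"
  proof (intro AE_I2)
    fix x
    have "\<bar>f x\<bar> \<le> \<bar>C\<bar>"
      using assms(2)[of x] by linarith
    then show "norm ((f x)\<^sup>2) \<le> C\<^sup>2"
      by (simp add: abs_le_square_iff)
  qed
qed (use assms in measurable)

lemma integrable_bounded_mult:
  fixes f h :: "'a \<Rightarrow> real"
  assumes "integrable M f" "h \<in> borel_measurable M" and "\<And>x. x \<in> space M \<Longrightarrow> \<bar>h x\<bar> \<le> C"
  shows "integrable M (\<lambda>x. h x * f x)"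
proof (rule Bochner_Integration.integrable_bound)
  show "integrable M (\<lambda>x. C * f x)"
    using assms by simp
  show "AE x in M. norm (h x * f x) \<le> norm (C * f x)"
  proof (intro AE_I2 impI)
    fix x assume "x \<in> space M"
    with assms(3) have "\<bar>h x\<bar> \<le> \<bar>C\<bar>" by fastforce
    then show "norm (h x * f x) \<le> norm (C * f x)"
      by (simp add: abs_mult mult_right_mono)
  qed
qed (use assms borel_measurable_integrable in measurable)

lemma abs_integral_inner_le:
  fixes a d :: "'a \<Rightarrow> 'v::real_inner"
  assumes "integrable M (\<lambda>x. (norm (a x))\<^sup>2)" "integrable M (\<lambda>x. (norm (d x))\<^sup>2)"
    and "integrable M (\<lambda>x. inner (a x) (d x))" and "t > 0"
  shows "\<bar>\<integral>x. inner (a x) (d x) \<partial>M\<bar>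
           \<le> (t * (\<integral>x. (norm (a x))\<^sup>2 \<partial>M) + (\<integral>x. (norm (d x))\<^sup>2 \<partial>M) / t) / 2"
proof -
  have "\<bar>\<integral>x. inner (a x) (d x) \<partial>M\<bar> \<le> (\<integral>x. \<bar>inner (a x) (d x)\<bar> \<partial>M)"
    by (rule integral_abs_bound)
  also have "\<dots> \<le> (\<integral>x. (t * (norm (a x))\<^sup>2 + (norm (d x))\<^sup>2 / t) / 2 \<partial>M)"
  proof (rule integral_mono)
    fix x
    \<comment> \<open>weighted AM-GM: \<open>2 \<alpha> \<beta> \<le> t \<alpha>\<^sup>2 + \<beta>\<^sup>2 / t\<close>\<close>
    have "2 * (t * norm (a x)) * norm (d x) \<le> (t * norm (a x))\<^sup>2 + (norm (d x))\<^sup>2"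
      by (rule sum_squares_bound)
    then have "norm (a x) * norm (d x) \<le> (t * (norm (a x))\<^sup>2 + (norm (d x))\<^sup>2 / t) / 2"
      using \<open>t > 0\<close> by (simp add: field_simps power2_eq_square)
    then show "\<bar>inner (a x) (d x)\<bar> \<le> (t * (norm (a x))\<^sup>2 + (norm (d x))\<^sup>2 / t) / 2"
      using Cauchy_Schwarz_ineq2[of "a x" "d x"] by linarith
  qed (use assms in auto)
  also have "\<dots> = (t * (\<integral>x. (norm (a x))\<^sup>2 \<partial>M) + (\<integral>x. (norm (d x))\<^sup>2 \<partial>M) / t) / 2"
    using assms by simp
  finally show ?thesis .
qed

lemma tendsto_integral_inner_L2:
  fixes a b :: "'a \<Rightarrow> 'v::real_inner" and c :: "nat \<Rightarrow> 'a \<Rightarrow> 'v"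
  assumes a: "integrable M (\<lambda>x. (norm (a x))\<^sup>2)"
    and cb: "\<And>n. integrable M (\<lambda>x. (norm (c n x - b x))\<^sup>2)"
    and lim: "(\<lambda>n. \<integral>x. (norm (c n x - b x))\<^sup>2 \<partial>M) \<longlonglongrightarrow> 0"
    and ac: "\<And>n. integrable M (\<lambda>x. inner (a x) (c n x))"
    and ab: "integrable M (\<lambda>x. inner (a x) (b x))"
  shows "(\<lambda>n. \<integral>x. inner (a x) (c n x) \<partial>M) \<longlonglongrightarrow> (\<integral>x. inner (a x) (b x) \<partial>M)"
proof (rule LIMSEQ_I)
  fix r :: real assume "r > 0"
  define K where "K = (\<integral>x. (norm (a x))\<^sup>2 \<partial>M)"
  define t where "t = r / (K + 1)"
  have "K \<ge> 0"
    unfolding K_def by (rule integral_nonneg_AE) auto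
  then have t: "t > 0" "t * K < r"
    using \<open>r > 0\<close> by (auto simp: t_def field_simps)
  obtain N where N: "\<And>n. n \<ge> N \<Longrightarrow> (\<integral>x. (norm (c n x - b x))\<^sup>2 \<partial>M) < t * r"
    using LIMSEQ_D[OF lim, of "t * r"] t \<open>r > 0\<close> by auto
  have "norm ((\<integral>x. inner (a x) (c n x) \<partial>M) - (\<integral>x. inner (a x) (b x) \<partial>M)) < r"
    if "n \<ge> N" for n
  proof -
    have diff: "(\<lambda>x. inner (a x) (c n x - b x)) = (\<lambda>x. inner (a x) (c n x) - inner (a x) (b x))"
      by (simp add: inner_diff_right)
    have "(\<integral>x. inner (a x) (c n x) \<partial>M) - (\<integral>x. inner (a x) (b x) \<partial>M)
          = (\<integral>x. inner (a x) (c n x - b x) \<partial>M)"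
      unfolding diff using ac ab by simp
    also have "\<bar>\<dots>\<bar> \<le> (t * K + (\<integral>x. (norm (c n x - b x))\<^sup>2 \<partial>M) / t) / 2"
      unfolding K_def using a cb ac ab t(1) by (intro abs_integral_inner_le) (auto simp: diff)
    also have "\<dots> < r"
    proof -
      have "(\<integral>x. (norm (c n x - b x))\<^sup>2 \<partial>M) / t < r"
        using N[OF that] t(1) by (simp add: pos_divide_less_eq mult.commute)
      then show ?thesis
        using t(2) by simp
    qed
    finally show ?thesis by simp
  qed
  then show "\<exists>N. \<forall>n\<ge>N. norm ((\<integral>x. inner (a x) (c n x) \<partial>M) - (\<integral>x. inner (a x) (b x) \<partial>M)) < r"
    by blast
qed

lemma integral_mult_bounded_between:
  fixes \<phi> h :: "'a \<Rightarrow> real"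
  assumes \<phi>: "integrable M \<phi>" and h: "h \<in> borel_measurable M"
    and bounds: "\<And>x. x \<in> space M \<Longrightarrow> A \<le> h x \<and> h x \<le> B"
  shows "A * (\<integral>x. max (\<phi> x) 0 \<partial>M) - B * (\<integral>x. max (- \<phi> x) 0 \<partial>M) \<le> (\<integral>x. h x * \<phi> x \<partial>M)"
    and "(\<integral>x. h x * \<phi> x \<partial>M) \<le> B * (\<integral>x. max (\<phi> x) 0 \<partial>M) - A * (\<integral>x. max (- \<phi> x) 0 \<partial>M)"
proof -
  have h\<phi>: "integrable M (\<lambda>x. h x * \<phi> x)"
    using bounds by (intro integrable_bounded_mult[OF \<phi> h, of "max \<bar>A\<bar> \<bar>B\<bar>"]) fastforce
  have parts: "integrable M (\<lambda>x. max (\<phi> x) 0)" "integrable M (\<lambda>x. max (- \<phi> x) 0)"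
    using \<phi> by auto
  have "(\<integral>x. A * max (\<phi> x) 0 - B * max (- \<phi> x) 0 \<partial>M) \<le> (\<integral>x. h x * \<phi> x \<partial>M)"
    using bounds by (intro integral_mono h\<phi>) (use parts in auto,
        auto simp: max_def mult_right_mono mult_right_mono_neg)
  then show "A * (\<integral>x. max (\<phi> x) 0 \<partial>M) - B * (\<integral>x. max (- \<phi> x) 0 \<partial>M) \<le> (\<integral>x. h x * \<phi> x \<partial>M)"
    using parts by simp
  have "(\<integral>x. h x * \<phi> x \<partial>M) \<le> (\<integral>x. B * max (\<phi> x) 0 - A * max (- \<phi> x) 0 \<partial>M)"
    using bounds by (intro integral_mono h\<phi>) (use parts in auto,
        auto simp: max_def mult_right_mono mult_right_mono_neg)
  then show "(\<integral>x. h x * \<phi> x \<partial>M) \<le> B * (\<integral>x. max (\<phi> x) 0 \<partial>M) - A * (\<integral>x. max (- \<phi> x) 0 \<partial>M)"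
    using parts by simp
qed

lemma integral_lebesgue_on_sign_sets:
  fixes \<phi> :: "'a::euclidean_space \<Rightarrow> real"
  assumes \<Omega>: "\<Omega> \<in> sets lebesgue" and [measurable]: "\<phi> \<in> borel_measurable (lebesgue_on \<Omega>)"
  shows "(\<integral>x. \<phi> x \<partial>lebesgue_on {x\<in>\<Omega>. \<phi> x > 0}) = (\<integral>x. max (\<phi> x) 0 \<partial>lebesgue_on \<Omega>)"
    and "(\<integral>x. \<phi> x \<partial>lebesgue_on {x\<in>\<Omega>. \<phi> x < 0}) = - (\<integral>x. max (- \<phi> x) 0 \<partial>lebesgue_on \<Omega>)"
proof -
  have in_lebesgue: "{x\<in>\<Omega>. P (\<phi> x)} \<in> sets lebesgue" if [measurable]: "Measurable.pred borel P" for P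
  proof -
    have "{x \<in> space (lebesgue_on \<Omega>). P (\<phi> x)} \<in> sets (lebesgue_on \<Omega>)"
      by measurable
    then show ?thesis
      using \<Omega> by (simp add: sets_restrict_space_iff space_restrict_space)
  qed
  have "(\<integral>x. \<phi> x \<partial>lebesgue_on {x\<in>\<Omega>. \<phi> x > 0})
        = (\<integral>x. indicator {x\<in>\<Omega>. \<phi> x > 0} x * \<phi> x \<partial>lebesgue)"
    using in_lebesgue[of "\<lambda>y. y > 0"] by (simp add: integral_restrict_space)
  also have "\<dots> = (\<integral>x. indicator \<Omega> x * max (\<phi> x) 0 \<partial>lebesgue)"
    by (intro Bochner_Integration.integral_cong) (auto simp: indicator_def)
  also have "\<dots> = (\<integral>x. max (\<phi> x) 0 \<partial>lebesgue_on \<Omega>)"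
    using \<Omega> by (simp add: integral_restrict_space)
  finally show "(\<integral>x. \<phi> x \<partial>lebesgue_on {x\<in>\<Omega>. \<phi> x > 0}) = (\<integral>x. max (\<phi> x) 0 \<partial>lebesgue_on \<Omega>)" .
  have "(\<integral>x. \<phi> x \<partial>lebesgue_on {x\<in>\<Omega>. \<phi> x < 0})
        = (\<integral>x. indicator {x\<in>\<Omega>. \<phi> x < 0} x * \<phi> x \<partial>lebesgue)"
    using in_lebesgue[of "\<lambda>y. y < 0"] by (simp add: integral_restrict_space)
  also have "\<dots> = (\<integral>x. - (indicator \<Omega> x * max (- \<phi> x) 0) \<partial>lebesgue)"
    by (intro Bochner_Integration.integral_cong) (auto simp: indicator_def)
  also have "\<dots> = - (\<integral>x. max (- \<phi> x) 0 \<partial>lebesgue_on \<Omega>)"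
    using \<Omega> by (simp add: integral_restrict_space)
  finally show "(\<integral>x. \<phi> x \<partial>lebesgue_on {x\<in>\<Omega>. \<phi> x < 0}) = - (\<integral>x. max (- \<phi> x) 0 \<partial>lebesgue_on \<Omega>)" .
qed

lemma tendsto_integral_mult_L2:
  fixes a b :: "'a \<Rightarrow> real" and c :: "nat \<Rightarrow> 'a \<Rightarrow> real"
  assumes "a \<in> borel_measurable M" "integrable M (\<lambda>x. (a x)\<^sup>2)"
    and "b \<in> borel_measurable M" "integrable M (\<lambda>x. (b x)\<^sup>2)"
    and "\<And>n. c n \<in> borel_measurable M" "\<And>n. integrable M (\<lambda>x. (c n x)\<^sup>2)"
    and "(\<lambda>n. \<integral>x. (c n x - b x)\<^sup>2 \<partial>M) \<longlonglongrightarrow> 0"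
  shows "(\<lambda>n. \<integral>x. a x * c n x \<partial>M) \<longlonglongrightarrow> (\<integral>x. a x * b x \<partial>M)"
  using tendsto_integral_inner_L2[of M a c b] assms
  by (simp add: square_integrable_diff square_integrable_mult)

lemma smooth_fun_differentiable: "smooth_fun h \<Longrightarrow> h differentiable (at x)"
  unfolding smooth_fun_def by blast

lemma smooth_fun_pderiv2:
  assumes "smooth_fun h"
  shows "smooth_fun (pderiv2 h i)"
proof -
  obtain F where "F h" and F: "\<And>h. F h \<Longrightarrow> (\<forall>x. h differentiable (at x)) \<and>
       (\<forall>i. F (\<lambda>x. frechet_derivative h (at x) (axis i 1)))"
    using assms unfolding smooth_fun_def by blast
  have "pderiv2 h i = (\<lambda>x. frechet_derivative h (at x) (axis i 1))"
    by (simp add: pderiv2_def fun_eq_iff)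
  then have "F (pderiv2 h i)"
    using F[OF \<open>F h\<close>] by simp
  then show ?thesis
    unfolding smooth_fun_def using F by (intro exI[of _ F]) blast
qed

lemma pderiv2_eq_0_outside_support:
  assumes "smooth_fun h" and "x \<notin> closure {x. h x \<noteq> 0}"
  shows "pderiv2 h i x = 0"
proof -
  have "(h has_derivative (\<lambda>_. 0)) (at x)"
  proof (rule has_derivative_transform_within_open[OF has_derivative_const])
    show "open (- closure {x. h x \<noteq> 0})"
      by (simp add: open_Compl)
    show "x \<in> - closure {x. h x \<noteq> 0}"
      using assms(2) by simp
    show "0 = h y" if "y \<in> - closure {x. h x \<noteq> 0}" for y
      using that closure_subset[of "{x. h x \<noteq> 0}"] by auto
  qed
  then show ?thesis
    unfolding pderiv2_def by (metis frechet_derivative_at)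
qed

lemma test_fun_pderiv2:
  assumes "test_fun \<Omega> \<psi>"
  shows "test_fun \<Omega> (pderiv2 \<psi> i)"
proof -
  have smooth: "smooth_fun \<psi>" and compact: "compact (closure {x. \<psi> x \<noteq> 0})"
    and support: "closure {x. \<psi> x \<noteq> 0} \<subseteq> \<Omega>"
    using assms unfolding test_fun_def by auto
  have "{x. pderiv2 \<psi> i x \<noteq> 0} \<subseteq> closure {x. \<psi> x \<noteq> 0}"
    using pderiv2_eq_0_outside_support[OF smooth] by blast
  then have sub: "closure {x. pderiv2 \<psi> i x \<noteq> 0} \<subseteq> closure {x. \<psi> x \<noteq> 0}"
    by (simp add: closure_minimal)
  have "compact (closure {x. \<psi> x \<noteq> 0} \<inter> closure {x. pderiv2 \<psi> i x \<noteq> 0})"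
    using compact by (rule compact_Int_closed) simp
  then have "compact (closure {x. pderiv2 \<psi> i x \<noteq> 0})"
    using sub by (simp add: Int_absorb1)
  then show ?thesis
    unfolding test_fun_def using smooth_fun_pderiv2[OF smooth] sub support by blast
qed

lemma test_fun_bounded:
  assumes "test_fun \<Omega> \<psi>"
  obtains C where "\<And>x. \<bar>\<psi> x\<bar> \<le> C"
proof -
  let ?K = "closure {x. \<psi> x \<noteq> 0}"
  have smooth: "smooth_fun \<psi>" and compact: "compact ?K"
    using assms unfolding test_fun_def by auto
  have "continuous_on ?K \<psi>"
    by (rule continuous_at_imp_continuous_on)
      (use smooth_fun_differentiable[OF smooth] differentiable_imp_continuous_within in blast)
  then have "bounded (\<psi> ` ?K)"
    using compact by (simp add: compact_continuous_image compact_imp_bounded)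
  then obtain C where C: "\<And>x. x \<in> ?K \<Longrightarrow> \<bar>\<psi> x\<bar> \<le> C"
    unfolding bounded_iff by auto
  have "\<bar>\<psi> x\<bar> \<le> max C 0" for x
  proof (cases "\<psi> x = 0")
    case False
    then have "x \<in> ?K"
      using closure_subset[of "{x. \<psi> x \<noteq> 0}"] by auto
    then show ?thesis
      using C by (simp add: le_max_iff_disj)
  qed simp
  then show ?thesis by (rule that)
qed

lemma L2_on_mult_integrable:
  "L2_on \<Omega> f \<Longrightarrow> L2_on \<Omega> g \<Longrightarrow> integrable (lebesgue_on \<Omega>) (\<lambda>x. f x * g x)"
  unfolding L2_on_def by (blast intro: square_integrable_mult)

lemma L2_on_diff: "L2_on \<Omega> f \<Longrightarrow> L2_on \<Omega> g \<Longrightarrow> L2_on \<Omega> (\<lambda>x. f x - g x)"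
  unfolding L2_on_def by (blast intro: square_integrable_diff borel_measurable_diff)

lemma L2_on_integrable_norm_square:
  fixes G :: "real^2 \<Rightarrow> real^'n"
  assumes "\<forall>i. L2_on \<Omega> (\<lambda>x. G x $ i)"
  shows "integrable (lebesgue_on \<Omega>) (\<lambda>x. (norm (G x))\<^sup>2)"
  using assms unfolding L2_on_def power2_norm_eq_inner inner_vec_def
  by (auto simp: power2_eq_square)

lemma L2_on_integrable_inner:
  fixes G H :: "real^2 \<Rightarrow> real^'n"
  assumes "\<forall>i. L2_on \<Omega> (\<lambda>x. G x $ i)" "\<forall>i. L2_on \<Omega> (\<lambda>x. H x $ i)"
  shows "integrable (lebesgue_on \<Omega>) (\<lambda>x. G x \<bullet> H x)"
  using assms unfolding inner_vec_def
  by (auto intro!: Bochner_Integration.integrable_sum L2_on_mult_integrable)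

lemma dirichlet_weak_solution_L2_on:
  assumes "dirichlet_weak_solution \<Omega> F u"
  shows "L2_on \<Omega> F" "L2_on \<Omega> u"
  using assms unfolding dirichlet_weak_solution_def H10_def H1_grad_def by auto

context
  fixes \<Omega> :: "(real^2) set"
  assumes open_\<Omega>: "open \<Omega>" and bounded_\<Omega>: "bounded \<Omega>"
begin

lemma finite_measure_lebesgue_on_bounded_open: "finite_measure (lebesgue_on \<Omega>)"
  by (rule finite_measure_lebesgue_on[OF lmeasurable_open[OF bounded_\<Omega> open_\<Omega>]])

lemma L2_on_integrable: "L2_on \<Omega> f \<Longrightarrow> integrable (lebesgue_on \<Omega>) f"
  unfolding L2_on_def
  by (blast intro: finite_measure.square_integrable_imp_integrable[OF finite_measure_lebesgue_on_bounded_open])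

lemma test_fun_L2_on:
  assumes "test_fun \<Omega> \<psi>"
  shows "L2_on \<Omega> \<psi>"
proof -
  obtain C where "\<And>x. \<bar>\<psi> x\<bar> \<le> C"
    using test_fun_bounded[OF assms] by metis
  moreover have "\<psi> \<in> borel_measurable (lebesgue_on \<Omega>)"
  proof (rule continuous_imp_measurable_on_sets_lebesgue)
    show "continuous_on \<Omega> \<psi>"
      using assms smooth_fun_differentiable differentiable_imp_continuous_within
      unfolding test_fun_def by (blast intro: continuous_at_imp_continuous_on)
  qed (simp add: open_\<Omega> borel_open)
  ultimately show ?thesis
    unfolding L2_on_def
    using finite_measure.bounded_imp_square_integrable[OF finite_measure_lebesgue_on_bounded_open] by blast
qed

lemma test_fun_grad2_L2_on:
  assumes "test_fun \<Omega> \<psi>"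
  shows "\<forall>i. L2_on \<Omega> (\<lambda>x. grad2 \<psi> x $ i)"
  using test_fun_L2_on[OF test_fun_pderiv2[OF assms]] by (simp add: grad2_def)

text \<open>The right-hand side does not involve \<open>g\<close>: pairing a weak gradient with the gradient
  of a test function does not depend on which weak gradient is chosen.\<close>
lemma H1_grad_integral_inner_grad2:
  assumes "H1_grad \<Omega> u g" and \<psi>: "test_fun \<Omega> \<psi>"
  shows "(\<integral>x. g x \<bullet> grad2 \<psi> x \<partial>lebesgue_on \<Omega>)
           = - (\<Sum>i\<in>UNIV. \<integral>x. u x * pderiv2 (pderiv2 \<psi> i) i x \<partial>lebesgue_on \<Omega>)"
proof -
  have g: "\<forall>i. L2_on \<Omega> (\<lambda>x. g x $ i)" and weak: "weak_gradient \<Omega> u g"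
    using assms(1) unfolding H1_grad_def by auto
  have "(\<integral>x. g x \<bullet> grad2 \<psi> x \<partial>lebesgue_on \<Omega>)
        = (\<Sum>i\<in>UNIV. \<integral>x. g x $ i * pderiv2 \<psi> i x \<partial>lebesgue_on \<Omega>)"
    unfolding inner_vec_def grad2_def
    using g test_fun_grad2_L2_on[OF \<psi>]
    by (subst Bochner_Integration.integral_sum) (auto simp: grad2_def intro: L2_on_mult_integrable)
  also have "\<dots> = (\<Sum>i\<in>UNIV. - (\<integral>x. u x * pderiv2 (pderiv2 \<psi> i) i x \<partial>lebesgue_on \<Omega>))"
    using weak test_fun_pderiv2[OF \<psi>] unfolding weak_gradient_def by simp
  finally show ?thesis
    by (simp add: sum_negf)
qed

lemma dirichlet_weak_solution_energy:
  assumes sol: "dirichlet_weak_solution \<Omega> F u" and Gu: "H1_grad \<Omega> u Gu"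
    and Gw: "H1_grad \<Omega> w Gw" and \<psi>: "\<And>n. test_fun \<Omega> (\<psi> n)"
    and lim: "(\<lambda>n. \<integral>x. (\<psi> n x - w x)\<^sup>2 \<partial>lebesgue_on \<Omega>) \<longlonglongrightarrow> 0"
    and lim_grad: "(\<lambda>n. \<integral>x. (norm (grad2 (\<psi> n) x - Gw x))\<^sup>2 \<partial>lebesgue_on \<Omega>) \<longlonglongrightarrow> 0"
  shows "(\<integral>x. Gu x \<bullet> Gw x \<partial>lebesgue_on \<Omega>) = (\<integral>x. F x * w x \<partial>lebesgue_on \<Omega>)"
proof -
  obtain gu where gu: "H1_grad \<Omega> u gu" and eq: "\<And>v. test_fun \<Omega> v \<Longrightarrow>
      (\<integral>x. gu x \<bullet> grad2 v x \<partial>lebesgue_on \<Omega>) = (\<integral>x. F x * v x \<partial>lebesgue_on \<Omega>)"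
    using sol unfolding dirichlet_weak_solution_def by blast
  have F: "L2_on \<Omega> F" and Lu: "L2_on \<Omega> u"
    using dirichlet_weak_solution_L2_on[OF sol] .
  have Gu_L2: "\<forall>i. L2_on \<Omega> (\<lambda>x. Gu x $ i)" and Gw_L2: "\<forall>i. L2_on \<Omega> (\<lambda>x. Gw x $ i)"
    and w: "L2_on \<Omega> w"
    using Gu Gw unfolding H1_grad_def by auto
  have grad_diff_L2: "\<forall>i. L2_on \<Omega> (\<lambda>x. (grad2 (\<psi> n) x - Gw x) $ i)" for n
    using test_fun_grad2_L2_on[OF \<psi>] Gw_L2 by (simp add: L2_on_diff)
  have "(\<lambda>n. \<integral>x. Gu x \<bullet> grad2 (\<psi> n) x \<partial>lebesgue_on \<Omega>) \<longlonglongrightarrow> (\<integral>x. Gu x \<bullet> Gw x \<partial>lebesgue_on \<Omega>)"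
    by (intro tendsto_integral_inner_L2 lim_grad L2_on_integrable_norm_square
        L2_on_integrable_inner Gu_L2 Gw_L2 test_fun_grad2_L2_on \<psi> grad_diff_L2)
  moreover have "(\<integral>x. Gu x \<bullet> grad2 (\<psi> n) x \<partial>lebesgue_on \<Omega>) = (\<integral>x. F x * \<psi> n x \<partial>lebesgue_on \<Omega>)"
    for n
    using H1_grad_integral_inner_grad2[OF Gu \<psi>] H1_grad_integral_inner_grad2[OF gu \<psi>] eq[OF \<psi>]
    by simp
  moreover have "(\<lambda>n. \<integral>x. F x * \<psi> n x \<partial>lebesgue_on \<Omega>) \<longlonglongrightarrow> (\<integral>x. F x * w x \<partial>lebesgue_on \<Omega>)"
    using F w test_fun_L2_on[OF \<psi>] lim unfolding L2_on_def
    by (intro tendsto_integral_mult_L2) auto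
  ultimately show ?thesis
    using LIMSEQ_unique by auto
qed

lemma dirichlet_weak_solution_symmetric:
  assumes u: "dirichlet_weak_solution \<Omega> F u" and w: "dirichlet_weak_solution \<Omega> G w"
  shows "(\<integral>x. F x * w x \<partial>lebesgue_on \<Omega>) = (\<integral>x. G x * u x \<partial>lebesgue_on \<Omega>)"
proof -
  obtain Gu \<psi> where Gu: "H1_grad \<Omega> u Gu" and \<psi>: "\<And>n. test_fun \<Omega> (\<psi> n)"
    and \<psi>_lim: "(\<lambda>n. \<integral>x. (\<psi> n x - u x)\<^sup>2 \<partial>lebesgue_on \<Omega>) \<longlonglongrightarrow> 0"
    and \<psi>_lim_grad: "(\<lambda>n. \<integral>x. (norm (grad2 (\<psi> n) x - Gu x))\<^sup>2 \<partial>lebesgue_on \<Omega>) \<longlonglongrightarrow> 0"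
    using u unfolding dirichlet_weak_solution_def H10_def by blast
  obtain Gw \<zeta> where Gw: "H1_grad \<Omega> w Gw" and \<zeta>: "\<And>n. test_fun \<Omega> (\<zeta> n)"
    and \<zeta>_lim: "(\<lambda>n. \<integral>x. (\<zeta> n x - w x)\<^sup>2 \<partial>lebesgue_on \<Omega>) \<longlonglongrightarrow> 0"
    and \<zeta>_lim_grad: "(\<lambda>n. \<integral>x. (norm (grad2 (\<zeta> n) x - Gw x))\<^sup>2 \<partial>lebesgue_on \<Omega>) \<longlonglongrightarrow> 0"
    using w unfolding dirichlet_weak_solution_def H10_def by blast
  have "(\<integral>x. F x * w x \<partial>lebesgue_on \<Omega>) = (\<integral>x. Gu x \<bullet> Gw x \<partial>lebesgue_on \<Omega>)"
    using dirichlet_weak_solution_energy[OF u Gu Gw \<zeta> \<zeta>_lim \<zeta>_lim_grad] by simp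
  also have "\<dots> = (\<integral>x. Gw x \<bullet> Gu x \<partial>lebesgue_on \<Omega>)"
    by (simp add: inner_commute)
  also have "\<dots> = (\<integral>x. G x * u x \<partial>lebesgue_on \<Omega>)"
    by (rule dirichlet_weak_solution_energy[OF w Gw Gu \<psi> \<psi>_lim \<psi>_lim_grad])
  finally show ?thesis .
qed

lemma dirichlet_weak_solution_orthogonal_eigenfunction:
  assumes sol: "dirichlet_weak_solution \<Omega> (\<lambda>x. \<mu> * u x + h x) u"
    and eig: "dirichlet_eigenpair \<Omega> \<mu> \<phi>"
  shows "(\<integral>x. h x * \<phi> x \<partial>lebesgue_on \<Omega>) = 0"
proof -
  have eig_sol: "dirichlet_weak_solution \<Omega> (\<lambda>x. \<mu> * \<phi> x) \<phi>"
    using eig unfolding dirichlet_eigenpair_def by blast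
  have F: "L2_on \<Omega> (\<lambda>x. \<mu> * u x + h x)" and u: "L2_on \<Omega> u"
    using dirichlet_weak_solution_L2_on[OF sol] .
  have \<phi>: "L2_on \<Omega> \<phi>"
    using dirichlet_weak_solution_L2_on[OF eig_sol] by simp
  have "(\<integral>x. h x * \<phi> x \<partial>lebesgue_on \<Omega>)
        = (\<integral>x. (\<mu> * u x + h x) * \<phi> x - \<mu> * (u x * \<phi> x) \<partial>lebesgue_on \<Omega>)"
    by (simp add: algebra_simps)
  also have "\<dots> = (\<integral>x. (\<mu> * u x + h x) * \<phi> x \<partial>lebesgue_on \<Omega>) - \<mu> * (\<integral>x. u x * \<phi> x \<partial>lebesgue_on \<Omega>)"
    using L2_on_mult_integrable[OF F \<phi>] L2_on_mult_integrable[OF u \<phi>] by simp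
  also have "\<dots> = 0"
    using dirichlet_weak_solution_symmetric[OF sol eig_sol] by (simp add: mult_ac)
  finally show ?thesis .
qed

end

lemma exists_factor_separating:
  fixes P N :: real
  assumes "0 \<le> P" "0 \<le> N" "P \<noteq> N"
  obtains B where "1 < B" "B * N < P \<or> B * P < N"
proof -
  have "B * y < x" if "0 \<le> y" "y < x" "B = 1 + (x - y) / (x + y + 1)" for x y B :: real
  proof -
    have "(x - y) * y < (x - y) * (x + y + 1)"
      using that by (intro mult_strict_left_mono) auto
    then have "(x - y) * y / (x + y + 1) < x - y"
      using that by (simp add: pos_divide_less_eq)
    moreover have "B * y = y + (x - y) * y / (x + y + 1)"
      using that(3) by (simp add: distrib_right)
    ultimately show ?thesis
      by linarith
  qed
  from this[of N P] this[of P N] assms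
  show ?thesis
    by (intro that[of "1 + \<bar>P - N\<bar> / (P + N + 1)"]) (auto simp: abs_if add.commute)
qed

theorem proposition4p4:
  fixes \<Omega> :: "(real^2) set" and \<epsilon> lam_j :: real and \<phi>j :: "real^2 \<Rightarrow> real"
  assumes "open \<Omega>" and "bounded \<Omega>" and "connected \<Omega>" and "simply_connected \<Omega>"
    and "C2eps_boundary \<epsilon> \<Omega>"
    and "dirichlet_eigenpair \<Omega> lam_j \<phi>j"
    and "integral\<^sup>L (lebesgue_on {x\<in>\<Omega>. \<phi>j x > 0}) \<phi>j
         \<noteq> - integral\<^sup>L (lebesgue_on {x\<in>\<Omega>. \<phi>j x < 0}) \<phi>j"
  shows "\<exists>A B. 0 < A \<and> A < B \<and>
           (\<forall>\<theta> :: real \<Rightarrow> real. (\<forall>\<eta>. A < \<theta> \<eta> \<and> \<theta> \<eta> < B) \<longrightarrow>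
              \<not> (\<exists>\<phi>. dirichlet_weak_solution \<Omega> (\<lambda>x. lam_j * \<phi> x + \<theta> (\<phi> x)) \<phi>))"
proof -
  define P where "P = (\<integral>x. max (\<phi>j x) 0 \<partial>lebesgue_on \<Omega>)"
  define N where "N = (\<integral>x. max (- \<phi>j x) 0 \<partial>lebesgue_on \<Omega>)"
  have "dirichlet_weak_solution \<Omega> (\<lambda>x. lam_j * \<phi>j x) \<phi>j"
    using assms(6) unfolding dirichlet_eigenpair_def by (rule conjunct1)
  then have "L2_on \<Omega> \<phi>j"
    by (rule dirichlet_weak_solution_L2_on(2))
  then have \<phi>j: "integrable (lebesgue_on \<Omega>) \<phi>j" "\<phi>j \<in> borel_measurable (lebesgue_on \<Omega>)"
    by (rule L2_on_integrable[OF assms(1,2)], simp add: L2_on_def)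
  have \<Omega>: "\<Omega> \<in> sets lebesgue"
    using assms(1) by (simp add: borel_open)
  have "P \<noteq> N"
    using assms(7) unfolding integral_lebesgue_on_sign_sets[OF \<Omega> \<phi>j(2)] P_def N_def by simp
  moreover have "0 \<le> P" "0 \<le> N"
    unfolding P_def N_def by (simp_all add: integral_nonneg_AE)
  ultimately obtain B where "1 < B" and B: "B * N < P \<or> B * P < N"
    using exists_factor_separating by blast
  have "\<not> (\<exists>\<phi>. dirichlet_weak_solution \<Omega> (\<lambda>x. lam_j * \<phi> x + \<theta> (\<phi> x)) \<phi>)"
    if \<theta>: "\<forall>\<eta>. 1 < \<theta> \<eta> \<and> \<theta> \<eta> < B" for \<theta> :: "real \<Rightarrow> real"
  proof
    assume "\<exists>\<phi>. dirichlet_weak_solution \<Omega> (\<lambda>x. lam_j * \<phi> x + \<theta> (\<phi> x)) \<phi>"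
    then obtain u where sol: "dirichlet_weak_solution \<Omega> (\<lambda>x. lam_j * u x + \<theta> (u x)) u"
      by blast
    have "u \<in> borel_measurable (lebesgue_on \<Omega>)"
      and "(\<lambda>x. lam_j * u x + \<theta> (u x)) \<in> borel_measurable (lebesgue_on \<Omega>)"
      using dirichlet_weak_solution_L2_on[OF sol] unfolding L2_on_def by auto
    then have "(\<lambda>x. (lam_j * u x + \<theta> (u x)) - lam_j * u x) \<in> borel_measurable (lebesgue_on \<Omega>)"
      by (intro borel_measurable_diff borel_measurable_times borel_measurable_const)
    then have \<theta>u: "(\<lambda>x. \<theta> (u x)) \<in> borel_measurable (lebesgue_on \<Omega>)"
      by simp
    have "\<And>x. x \<in> space (lebesgue_on \<Omega>) \<Longrightarrow> 1 \<le> \<theta> (u x) \<and> \<theta> (u x) \<le> B"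
      using \<theta> by (simp add: less_imp_le)
    note bounds = integral_mult_bounded_between[OF \<phi>j(1) \<theta>u this, folded P_def N_def]
    have "(\<integral>x. \<theta> (u x) * \<phi>j x \<partial>lebesgue_on \<Omega>) = 0"
      by (rule dirichlet_weak_solution_orthogonal_eigenfunction[OF assms(1,2) sol assms(6)])
    with bounds show False
      using B by linarith
  qed
  with \<open>1 < B\<close> show ?thesis
    by (intro exI[of _ "1::real"] exI[of _ B]) simp
qed

end
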